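(* Let $\hat s:\Delta_{\mathcal Y}\times\mathcal Y\to\mathbb R\cup\{\pm\infty\}$ be a permutation-invariant regular classical scoring rule, $\mathcal Y=\{1,\dots,n\}$, and let $S=S[\hat s]$ be the corresponding spectral quantum score on $\mathbb C^n$. Then $S$ is truthful if and only if $\hat s$ is proper, and $S$ is strictly truthful if and only if $\hat s$ is strictly proper.
   Context: $\lambda(\rho)$ denotes the eigenvalues of $\rho$ in decreasing order; $\mathrm{Dens}(\mathbb C^n)$ the density matrices; $\langle X,Y\rangle=\mathrm{Tr}(X^*Y)$. A classical scoring rule $\hat s$ has expected score $\hat s(q;p)=\sum_yp_y\hat s(q,y)$ ($0\cdot\pm\infty=0$); it is proper if $\hat s(q;p)\le\hat s(p;p)$ for all $p,q\in\Delta_{\mathcal Y}$, strictly proper if strict for $q\neq p$, regular if $\hat s(q;p)\in\mathbb R\cup\{-\infty\}$ and $\hat s(p;p)\in\mathbb R$ for all $p,q$; permutation-invariant if $\hat s(p,y)=\hat s(\pi p,\pi_y)$ for every permutation $\pi$, $(\pi p)_y=p_{\pi_y}$. The spectral score $S[\hat s]=(s,\mu^{\mathrm{spec}})$: $\mu^{\mathrm{spec}}(\rho)=\{x_yx_y^*\}_{y\in\mathcal Y}$ for an arbitrary orthonormal eigenbasis with $\rho=\sum_y\lambda(\rho)_yx_yx_y^*$, and $s(\rho,y)=\hat s(\lambda(\rho),y)$; expected score $S(\rho';\rho)=\sum_y\langle\mu^{\mathrm{spec}}(\rho')_y,\rho\rangle s(\rho',y)$. $S$ is truthful if $S(\rho;\rho)\ge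 S(\rho';\rho)$ for all $\rho,\rho'$, strictly truthful if strict when $\rho'\neq\rho$. *)

theory Defs
  imports "Jordan_Normal_Form.Schur_Decomposition"
          "HOL-Combinatorics.Permutations"
          "HOL-Library.Extended_Real"
begin

text \<open>Outcomes: \<open>Y = {0..<n}\<close> (the paper's \<open>{1,...,n}\<close>, shifted by one).\<close>

definition simplex :: "nat \<Rightarrow> (nat \<Rightarrow> real) set" where
  "simplex n = {p. (\<forall>y<n. 0 \<le> p y) \<and> (\<forall>y\<ge>n. p y = 0) \<and> (\<Sum>y<n. p y) = 1}"

text \<open>Classical scoring rule: \<open>s :: (nat \<Rightarrow> real) \<Rightarrow> nat \<Rightarrow> ereal\<close>;
  expected score with the convention \<open>0 \<cdot> \<plusminus>\<infinity> = 0\<close>.\<close>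

definition exp_score :: "nat \<Rightarrow> ((nat \<Rightarrow> real) \<Rightarrow> nat \<Rightarrow> ereal) \<Rightarrow> (nat \<Rightarrow> real) \<Rightarrow> (nat \<Rightarrow> real) \<Rightarrow> ereal" where
  "exp_score n s q p = (\<Sum>y<n. if p y = 0 then 0 else ereal (p y) * s q y)"

definition proper :: "nat \<Rightarrow> ((nat \<Rightarrow> real) \<Rightarrow> nat \<Rightarrow> ereal) \<Rightarrow> bool" where
  "proper n s \<longleftrightarrow> (\<forall>p\<in>simplex n. \<forall>q\<in>simplex n. exp_score n s q p \<le> exp_score n s p p)"

definition strictly_proper :: "nat \<Rightarrow> ((nat \<Rightarrow> real) \<Rightarrow> nat \<Rightarrow> ereal) \<Rightarrow> bool" where
  "strictly_proper n s \<longleftrightarrow>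
     (\<forall>p\<in>simplex n. \<forall>q\<in>simplex n. q \<noteq> p \<longrightarrow> exp_score n s q p < exp_score n s p p)"

definition regular :: "nat \<Rightarrow> ((nat \<Rightarrow> real) \<Rightarrow> nat \<Rightarrow> ereal) \<Rightarrow> bool" where
  "regular n s \<longleftrightarrow>
     (\<forall>p\<in>simplex n. \<forall>q\<in>simplex n. exp_score n s q p \<noteq> \<infinity>) \<and>
     (\<forall>p\<in>simplex n. exp_score n s p p \<noteq> \<infinity> \<and> exp_score n s p p \<noteq> -\<infinity>)"

text \<open>Permutation invariance: relabelling outcomes by \<open>\<pi>\<close> (so that \<open>(\<pi> p) (\<pi> y) = p y\<close>)
  does not change the score.\<close>

definition perm_dist :: "(nat \<Rightarrow> nat) \<Rightarrow> (nat \<Rightarrow> real) \<Rightarrow> (nat \<Rightarrow> real)" where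
  "perm_dist \<pi> p = p \<circ> inv_into UNIV \<pi>"

definition perm_invariant :: "nat \<Rightarrow> ((nat \<Rightarrow> real) \<Rightarrow> nat \<Rightarrow> ereal) \<Rightarrow> bool" where
  "perm_invariant n s \<longleftrightarrow>
     (\<forall>\<pi>. \<pi> permutes {..<n} \<longrightarrow>
        (\<forall>p\<in>simplex n. \<forall>y<n. s p y = s (perm_dist \<pi> p) (\<pi> y)))"

definition mtrace :: "complex mat \<Rightarrow> complex" where
  "mtrace A = (\<Sum>i<dim_row A. A $$ (i, i))"

definition hs_inner :: "complex mat \<Rightarrow> complex mat \<Rightarrow> complex" where
  "hs_inner X Y = mtrace (mat_adjoint X * Y)"

definition outer :: "complex vec \<Rightarrow> complex mat" where
  "outer x = mat (dim_vec x) (dim_vec x) (\<lambda>(i, j). x $ i * cnj (x $ j))"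

definition Dens :: "nat \<Rightarrow> complex mat set" where
  "Dens n = {\<rho>. \<rho> \<in> carrier_mat n n \<and> mat_adjoint \<rho> = \<rho> \<and>
                 (\<forall>v\<in>carrier_vec n. 0 \<le> Re (v \<bullet>c (\<rho> *\<^sub>v v))) \<and> mtrace \<rho> = 1}"

definition eigvals :: "nat \<Rightarrow> complex mat \<Rightarrow> (nat \<Rightarrow> real)" where
  "eigvals n \<rho> = (THE l. (\<forall>i\<ge>n. l i = 0) \<and> (\<forall>i j. i \<le> j \<longrightarrow> j < n \<longrightarrow> l j \<le> l i) \<and>
        char_poly \<rho> = (\<Prod>i<n. [:- complex_of_real (l i), 1:]))"

definition ordered_eigenbasis :: "nat \<Rightarrow> complex mat \<Rightarrow> (nat \<Rightarrow> complex vec) \<Rightarrow> bool" where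
  "ordered_eigenbasis n \<rho> x \<longleftrightarrow>
     (\<forall>y<n. x y \<in> carrier_vec n) \<and>
     (\<forall>y<n. \<forall>z<n. x y \<bullet>c x z = (if y = z then 1 else 0)) \<and>
     (\<forall>i<n. \<forall>j<n. \<rho> $$ (i, j) =
        (\<Sum>y<n. complex_of_real (eigvals n \<rho> y) * outer (x y) $$ (i, j)))"

definition spectral_measurement :: "nat \<Rightarrow> (complex mat \<Rightarrow> nat \<Rightarrow> complex mat) \<Rightarrow> bool" where
  "spectral_measurement n \<mu> \<longleftrightarrow>
     (\<forall>\<rho>\<in>Dens n. \<exists>x. ordered_eigenbasis n \<rho> x \<and> (\<forall>y<n. \<mu> \<rho> y = outer (x y)))"

text \<open>Expected score of the spectral score \<open>S[s] = (s, \<mu>)\<close>, \<open>s(\<rho>,y) = \<hat>s(\<lambda>(\<rho>),y)\<close>: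
  \<open>S(\<rho>';\<rho>) = \<Sum>\<^sub>y \<langle>\<mu>(\<rho>')\<^sub>y,\<rho>\<rangle> s(\<rho>',y)\<close> (the inner products are real).\<close>

definition spec_exp_score ::
  "nat \<Rightarrow> ((nat \<Rightarrow> real) \<Rightarrow> nat \<Rightarrow> ereal) \<Rightarrow> (complex mat \<Rightarrow> nat \<Rightarrow> complex mat) \<Rightarrow>
   complex mat \<Rightarrow> complex mat \<Rightarrow> ereal" where
  "spec_exp_score n s \<mu> \<rho>' \<rho> =
     (\<Sum>y<n. let w = Re (hs_inner (\<mu> \<rho>' y) \<rho>) in
              if w = 0 then 0 else ereal w * s (eigvals n \<rho>') y)"

definition truthful :: "nat \<Rightarrow> ((nat \<Rightarrow> real) \<Rightarrow> nat \<Rightarrow> ereal) \<Rightarrow> (complex mat \<Rightarrow> nat \<Rightarrow> complex mat) \<Rightarrow> bool" where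
  "truthful n s \<mu> \<longleftrightarrow>
     (\<forall>\<rho>\<in>Dens n. \<forall>\<rho>'\<in>Dens n. spec_exp_score n s \<mu> \<rho>' \<rho> \<le> spec_exp_score n s \<mu> \<rho> \<rho>)"

definition strictly_truthful :: "nat \<Rightarrow> ((nat \<Rightarrow> real) \<Rightarrow> nat \<Rightarrow> ereal) \<Rightarrow> (complex mat \<Rightarrow> nat \<Rightarrow> complex mat) \<Rightarrow> bool" where
  "strictly_truthful n s \<mu> \<longleftrightarrow>
     (\<forall>\<rho>\<in>Dens n. \<forall>\<rho>'\<in>Dens n. \<rho>' \<noteq> \<rho> \<longrightarrow> spec_exp_score n s \<mu> \<rho>' \<rho> < spec_exp_score n s \<mu> \<rho> \<rho>)"

end

theory Submission
  imports Defs
begin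

text \<open>Diagonalise \<open>\<rho> = \<Sum>\<^sub>z \<lambda>\<^sub>z x\<^sub>z x\<^sub>z\<^sup>*\<close> and \<open>\<rho>' = \<Sum>\<^sub>y \<lambda>'\<^sub>y x'\<^sub>y x'\<^sub>y\<^sup>*\<close> in the eigenbases chosen
  by \<open>\<mu>\<close>. Measuring \<open>\<rho>\<close> in the basis \<open>x'\<close> produces the distribution \<open>w = B \<lambda>\<close>, where
  \<open>B\<^sub>y\<^sub>z = |\<langle>x'\<^sub>y, x\<^sub>z\<rangle>|\<^sup>2\<close> is doubly stochastic, so \<open>S(\<rho>';\<rho>) = s(\<lambda>'; B \<lambda>)\<close> and
  \<open>S(\<rho>;\<rho>) = s(\<lambda>;\<lambda>)\<close>. By the rearrangement inequality, \<open>s(q; B \<lambda>) \<le> s(q; \<lambda>\<circ>\<tau>)\<close> for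
  the rearrangement \<open>\<lambda>\<circ>\<tau>\<close> that puts the largest weights on the highest scores of \<open>q\<close>;
  properness and permutation invariance then give \<open>s(\<lambda>'; B \<lambda>) \<le> s(\<lambda>\<circ>\<tau>; \<lambda>\<circ>\<tau>) = s(\<lambda>;\<lambda>)\<close>.
  Under strict properness equality forces \<open>\<lambda>' = B \<lambda> = \<lambda>\<circ>\<tau>\<close>; then \<open>B\<close> only couples equal
  eigenvalues, and \<open>\<rho> = \<rho>'\<close>. Conversely, states diagonal in a common basis reproduce every
  classical pair of scores \<open>s(q;p)\<close>, \<open>s(p;p)\<close>.\<close>

section \<open>Doubly stochastic matrices and rearrangements\<close>

abbreviation sorted_desc :: "nat \<Rightarrow> (nat \<Rightarrow> 'a::order) \<Rightarrow> bool" where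
  "sorted_desc n f \<equiv> \<forall>i j. i \<le> j \<longrightarrow> j < n \<longrightarrow> f j \<le> f i"

definition doubly_stochastic :: "nat \<Rightarrow> (nat \<Rightarrow> nat \<Rightarrow> real) \<Rightarrow> bool" where
  "doubly_stochastic n B \<longleftrightarrow>
     (\<forall>y<n. \<forall>z<n. 0 \<le> B y z) \<and> (\<forall>y<n. (\<Sum>z<n. B y z) = 1) \<and> (\<forall>z<n. (\<Sum>y<n. B y z) = 1)"

definition stoch_apply :: "nat \<Rightarrow> (nat \<Rightarrow> nat \<Rightarrow> real) \<Rightarrow> (nat \<Rightarrow> real) \<Rightarrow> nat \<Rightarrow> real" where
  "stoch_apply n B p y = (if y < n then \<Sum>z<n. B y z * p z else 0)"

lemma stoch_apply_simplex:
  assumes B: "doubly_stochastic n B" and p: "p \<in> simplex n"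
  shows "stoch_apply n B p \<in> simplex n"
proof -
  have "(\<Sum>y<n. stoch_apply n B p y) = (\<Sum>y<n. \<Sum>z<n. B y z * p z)"
    unfolding stoch_apply_def by simp
  also have "\<dots> = (\<Sum>z<n. (\<Sum>y<n. B y z) * p z)"
    by (subst sum.swap) (simp add: sum_distrib_right)
  also have "\<dots> = 1" using B p by (simp add: doubly_stochastic_def simplex_def)
  finally show ?thesis
    using B p by (auto simp: simplex_def doubly_stochastic_def stoch_apply_def intro!: sum_nonneg)
qed

lemma ex_sorting_permutation:
  fixes f :: "nat \<Rightarrow> 'a::linorder"
  shows "\<exists>\<sigma>. \<sigma> permutes {..<n} \<and> sorted_desc n (\<lambda>i. f (\<sigma> i))"
proof (induction n arbitrary: f)
  case 0
  show ?case by (auto intro: permutes_id)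
next
  case (Suc n)
  obtain m where m: "m < Suc n" and min: "\<And>k. k < Suc n \<Longrightarrow> f m \<le> f k"
    using Min_in[of "f ` {..<Suc n}"] Min_le[of "f ` {..<Suc n}"] by fastforce
  let ?t = "Transposition.transpose m n"
  obtain \<sigma> where \<sigma>: "\<sigma> permutes {..<n}" and sorted: "sorted_desc n (\<lambda>i. f (?t (\<sigma> i)))"
    using Suc.IH[of "f \<circ> ?t"] by auto
  have \<sigma>': "\<sigma> permutes {..<Suc n}" using \<sigma> by (rule permutes_subset) auto
  have perm: "?t \<circ> \<sigma> permutes {..<Suc n}"
    using m by (intro permutes_compose[OF \<sigma>'] permutes_swap_id) auto
  have "f (?t (\<sigma> j)) \<le> f (?t (\<sigma> i))" if "i \<le> j" "j < Suc n" for i j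
  proof (cases "j = n")
    case True
    then have "?t (\<sigma> j) = m" using permutes_not_in[OF \<sigma>] by simp
    moreover have "?t (\<sigma> i) < Suc n" using permutes_in_image[OF perm] that by auto
    ultimately show ?thesis using min by simp
  qed (use sorted that in auto)
  then show ?case using perm by auto
qed

text \<open>Abel summation: \<open>\<Sum>\<^sub>z \<lambda>\<^sub>z g\<^sub>z = \<Sum>\<^sub>k (\<lambda>\<^sub>k - \<lambda>\<^sub>k\<^sub>+\<^sub>1) \<Sum>\<^sub>z\<^sub>\<le>\<^sub>k g\<^sub>z\<close>.\<close>

lemma sum_mult_sorted_nonneg:
  fixes lam g :: "nat \<Rightarrow> real"
  assumes "sorted_desc n lam" "\<forall>i<n. 0 \<le> lam i" "\<forall>k\<le>n. 0 \<le> (\<Sum>z<k. g z)"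
  shows "0 \<le> (\<Sum>z<n. lam z * g z)"
  using assms
proof (induction n arbitrary: lam)
  case 0 then show ?case by simp
next
  case (Suc n)
  have "0 \<le> (\<Sum>z<n. (lam z - lam n) * g z)"
    using Suc.prems by (intro Suc.IH) auto
  moreover have "0 \<le> lam n * (\<Sum>z<Suc n. g z)"
    using Suc.prems by auto
  moreover have "(\<Sum>z<Suc n. lam z * g z) = (\<Sum>z<n. (lam z - lam n) * g z) + lam n * (\<Sum>z<Suc n. g z)"
    by (simp add: algebra_simps sum_subtractf sum_distrib_left)
  ultimately show ?case by linarith
qed

lemma sum_lessThan_if_less:
  fixes f :: "nat \<Rightarrow> 'a::comm_monoid_add"
  shows "k \<le> n \<Longrightarrow> (\<Sum>j<n. if j < k then f j else 0) = (\<Sum>j<k. f j)"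
proof -
  assume "k \<le> n"
  then have "{..<n} \<inter> {..<k} = {..<k}" by auto
  then show ?thesis using sum.inter_restrict[of "{..<n}" f "{..<k}"] by simp
qed

text \<open>Termwise, \<open>(t\<^sub>y - [y among the top k]) (c\<^sub>y - \<theta>) \<le> 0\<close> for the \<open>k\<close>-th largest value \<open>\<theta>\<close> of \<open>c\<close>.\<close>

lemma weighted_sum_le_top_sum:
  fixes t c :: "nat \<Rightarrow> real"
  assumes \<sigma>: "\<sigma> permutes {..<n}" and sorted: "sorted_desc n (\<lambda>i. c (\<sigma> i))"
    and t: "\<forall>y<n. 0 \<le> t y \<and> t y \<le> 1" and t_sum: "(\<Sum>y<n. t y) = real k" and "k \<le> n"
  shows "(\<Sum>y<n. t y * c y) \<le> (\<Sum>j<k. c (\<sigma> j))"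
proof -
  let ?u = "\<lambda>j. t (\<sigma> j)" and ?b = "\<lambda>j. c (\<sigma> j)" and ?e = "\<lambda>j. if j < k then 1 else 0 :: real"
  define \<theta> where "\<theta> = ?b (k - 1)"
  have u: "0 \<le> ?u j \<and> ?u j \<le> 1" if "j < n" for j
    using t permutes_in_image[OF \<sigma>] that by auto
  have "?u j * ?b j - ?e j * ?b j \<le> (?u j - ?e j) * \<theta>" if "j < n" for j
  proof (cases "j < k")
    case True
    then have "(?u j - 1) * (?b j - \<theta>) \<le> 0"
      using sorted u[OF that] \<open>k \<le> n\<close> unfolding \<theta>_def by (intro mult_nonpos_nonneg) auto
    then show ?thesis using True by (simp add: algebra_simps)
  next
    case False
    then show ?thesis
      using sorted u[OF that] that unfolding \<theta>_def by (auto intro: mult_left_mono)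
  qed
  then have "(\<Sum>j<n. ?u j * ?b j - ?e j * ?b j) \<le> (\<Sum>j<n. (?u j - ?e j) * \<theta>)"
    by (intro sum_mono) auto
  also have "\<dots> = ((\<Sum>j<n. ?u j) - (\<Sum>j<n. ?e j)) * \<theta>"
    by (simp only: sum_distrib_right[symmetric] sum_subtractf)
  also have "\<dots> = 0"
    using sum.permute[OF \<sigma>, of t] t_sum sum_lessThan_if_less[OF \<open>k \<le> n\<close>, of "\<lambda>_. 1::real"]
    by (simp add: comp_def)
  moreover have "(\<Sum>j<n. ?e j * ?b j) = (\<Sum>j<k. ?b j)"
    unfolding sum_lessThan_if_less[OF \<open>k \<le> n\<close>, symmetric] by (intro sum.cong) auto
  ultimately show ?thesis
    using sum.permute[OF \<sigma>, of "\<lambda>y. t y * c y"] by (simp add: comp_def sum_subtractf)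
qed

lemma doubly_stochastic_rearrangement:
  fixes c lam :: "nat \<Rightarrow> real"
  assumes B: "doubly_stochastic n B" and \<sigma>: "\<sigma> permutes {..<n}"
    and c_sorted: "sorted_desc n (\<lambda>i. c (\<sigma> i))"
    and lam_sorted: "sorted_desc n lam" and lam_nonneg: "\<forall>z<n. 0 \<le> lam z"
  shows "(\<Sum>y<n. (\<Sum>z<n. B y z * lam z) * c y) \<le> (\<Sum>k<n. lam k * c (\<sigma> k))"
proof -
  define e where "e z = (\<Sum>y<n. B y z * c y)" for z
  have "(\<Sum>y<n. (\<Sum>z<n. B y z * lam z) * c y) = (\<Sum>y<n. \<Sum>z<n. B y z * lam z * c y)"
    by (simp add: sum_distrib_right)
  also have "\<dots> = (\<Sum>z<n. lam z * e z)"
    unfolding e_def by (subst sum.swap) (simp add: sum_distrib_left mult_ac)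
  finally have lhs: "(\<Sum>y<n. (\<Sum>z<n. B y z * lam z) * c y) = (\<Sum>z<n. lam z * e z)" .
  have "(\<Sum>z<k. e z) \<le> (\<Sum>z<k. c (\<sigma> z))" if "k \<le> n" for k
  proof -
    define t where "t y = (\<Sum>z<k. B y z)" for y
    have "0 \<le> t y \<and> t y \<le> 1" if "y < n" for y
    proof
      show "0 \<le> t y" unfolding t_def using B \<open>k \<le> n\<close> that
        by (intro sum_nonneg) (auto simp: doubly_stochastic_def)
      have "t y \<le> (\<Sum>z<n. B y z)" unfolding t_def using B \<open>k \<le> n\<close> that
        by (intro sum_mono2) (auto simp: doubly_stochastic_def)
      then show "t y \<le> 1" using B that by (simp add: doubly_stochastic_def)
    qed
    moreover have "(\<Sum>y<n. t y) = real k"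
      unfolding t_def using B \<open>k \<le> n\<close> by (subst sum.swap) (simp add: doubly_stochastic_def)
    ultimately have "(\<Sum>y<n. t y * c y) \<le> (\<Sum>j<k. c (\<sigma> j))"
      using weighted_sum_le_top_sum[OF \<sigma> c_sorted] \<open>k \<le> n\<close> by blast
    moreover have "(\<Sum>y<n. t y * c y) = (\<Sum>z<k. e z)"
      unfolding t_def e_def by (subst sum.swap) (simp add: sum_distrib_right)
    ultimately show ?thesis by simp
  qed
  then have "0 \<le> (\<Sum>z<n. lam z * (c (\<sigma> z) - e z))"
    using lam_sorted lam_nonneg by (intro sum_mult_sorted_nonneg) (auto simp: sum_subtractf)
  then show ?thesis unfolding lhs by (simp add: algebra_simps sum_subtractf)
qed

text \<open>Equality case: \<open>\<Sum>\<^sub>z \<lambda>\<^sub>z\<^sup>2 - \<Sum>\<^sub>y w\<^sub>y\<^sup>2 = \<Sum>\<^sub>y\<^sub>z B\<^sub>y\<^sub>z (\<lambda>\<^sub>z - w\<^sub>y)\<^sup>2\<close> for \<open>w = B \<lambda>\<close>.\<close>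

lemma doubly_stochastic_equal_sum_squares:
  fixes lam :: "nat \<Rightarrow> real"
  assumes B: "doubly_stochastic n B"
    and squares: "(\<Sum>y<n. (\<Sum>z<n. B y z * lam z)\<^sup>2) = (\<Sum>z<n. (lam z)\<^sup>2)"
    and "y < n" "z < n" "B y z \<noteq> 0"
  shows "lam z = (\<Sum>z<n. B y z * lam z)"
proof -
  define w where "w y = (\<Sum>z<n. B y z * lam z)" for y
  define T where "T y z = B y z * (lam z - w y)\<^sup>2" for y z
  have T_nonneg: "0 \<le> T y z" if "y < n" "z < n" for y z
    unfolding T_def using B that by (simp add: doubly_stochastic_def)
  have row: "(\<Sum>z<n. T y z) = (\<Sum>z<n. B y z * (lam z)\<^sup>2) - (w y)\<^sup>2" if "y < n" for y
  proof -
    have "(\<Sum>z<n. T y z) = (\<Sum>z<n. B y z * (lam z)\<^sup>2) - 2 * w y * (\<Sum>z<n. B y z * lam z)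
        + (w y)\<^sup>2 * (\<Sum>z<n. B y z)"
      unfolding T_def by (simp add: power2_eq_square algebra_simps sum.distrib sum_subtractf
          sum_distrib_left)
    then show ?thesis using B that unfolding w_def by (simp add: doubly_stochastic_def power2_eq_square)
  qed
  have "(\<Sum>y<n. \<Sum>z<n. T y z) = (\<Sum>y<n. \<Sum>z<n. B y z * (lam z)\<^sup>2) - (\<Sum>y<n. (w y)\<^sup>2)"
    using row by (simp add: sum_subtractf)
  also have "(\<Sum>y<n. \<Sum>z<n. B y z * (lam z)\<^sup>2) = (\<Sum>z<n. (lam z)\<^sup>2)"
    using B by (subst sum.swap) (simp add: doubly_stochastic_def flip: sum_distrib_right)
  finally have "(\<Sum>y<n. \<Sum>z<n. T y z) = 0" using squares unfolding w_def by simp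
  then have "(\<Sum>z<n. T y z) = 0"
    using T_nonneg \<open>y < n\<close> by (subst (asm) sum_nonneg_eq_0_iff) (auto intro: sum_nonneg)
  then have "T y z = 0"
    using T_nonneg \<open>y < n\<close> \<open>z < n\<close> by (subst (asm) sum_nonneg_eq_0_iff) auto
  then show ?thesis using \<open>B y z \<noteq> 0\<close> unfolding T_def w_def by simp
qed

section \<open>Classical scoring rules\<close>

lemma simplex_permute:
  assumes "\<sigma> permutes {..<n}" "p \<in> simplex n"
  shows "p \<circ> \<sigma> \<in> simplex n"
proof -
  have "(\<Sum>y<n. p (\<sigma> y)) = 1"
    using sum.permute[OF assms(1), of p] assms(2) by (simp add: simplex_def comp_def)
  then show ?thesis
    using assms permutes_in_image[OF assms(1)] permutes_not_in[OF assms(1)] by (simp add: simplex_def)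
qed

lemma exp_score_permute:
  assumes s: "perm_invariant n s" and \<sigma>: "\<sigma> permutes {..<n}" and q: "q \<in> simplex n"
  shows "exp_score n s (q \<circ> \<sigma>) (p \<circ> \<sigma>) = exp_score n s q p"
proof -
  define g where "g z = (if p z = 0 then 0 else ereal (p z) * s q z)" for z
  have "perm_dist \<sigma> (q \<circ> \<sigma>) = q"
    unfolding perm_dist_def using permutes_surj[OF \<sigma>] by (auto simp: fun_eq_iff surj_f_inv_f)
  then have "s (q \<circ> \<sigma>) y = s q (\<sigma> y)" if "y < n" for y
    using s \<sigma> simplex_permute[OF \<sigma> q] that unfolding perm_invariant_def by metis
  then have "exp_score n s (q \<circ> \<sigma>) (p \<circ> \<sigma>) = sum (g \<circ> \<sigma>) {..<n}"
    unfolding exp_score_def g_def by (intro sum.cong) auto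
  also have "\<dots> = exp_score n s q p"
    unfolding exp_score_def g_def[abs_def] by (rule sum.permute[OF \<sigma>, symmetric])
  finally show ?thesis .
qed

lemma regular_score_not_PInf:
  assumes "regular n s" "q \<in> simplex n" "y < n"
  shows "s q y \<noteq> \<infinity>"
proof -
  define d where "d z = (if z = y then 1 else 0 :: real)" for z
  have d: "d \<in> simplex n" using \<open>y < n\<close> by (auto simp: simplex_def d_def)
  have "exp_score n s q d = (\<Sum>z<n. if z = y then s q y else 0)"
    unfolding exp_score_def d_def by (intro sum.cong) auto
  also have "\<dots> = s q y" using \<open>y < n\<close> by simp
  finally show ?thesis using assms d unfolding regular_def by metis
qed

lemma strictly_proper_imp_proper: "strictly_proper n s \<Longrightarrow> proper n s"
  unfolding strictly_proper_def proper_def by (metis order.order_iff_strict)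

lemma exp_score_real:
  assumes "\<forall>y<n. p y \<noteq> 0 \<longrightarrow> \<bar>s q y\<bar> \<noteq> \<infinity>"
  shows "exp_score n s q p = ereal (\<Sum>y<n. p y * real_of_ereal (s q y))"
proof -
  have "(if p y = 0 then 0 else ereal (p y) * s q y) = ereal (p y * real_of_ereal (s q y))"
    if "y < n" for y
    using assms that by (cases "s q y") auto
  then show ?thesis unfolding exp_score_def by (simp add: sum_ereal)
qed

lemma exp_score_MInf:
  assumes "\<forall>y<n. 0 \<le> p y \<and> s q y \<noteq> \<infinity>" "y < n" "p y \<noteq> 0" "s q y = -\<infinity>"
  shows "exp_score n s q p = -\<infinity>"
proof -
  let ?f = "\<lambda>y. if p y = 0 then 0 else ereal (p y) * s q y"
  have "?f y = -\<infinity>" using assms by (auto simp: order.strict_iff_order)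
  moreover have "?f z \<noteq> \<infinity>" if "z < n" for z
    using assms(1) that by (cases "s q z") auto
  then have "sum ?f ({..<n} - {y}) \<noteq> \<infinity>" by (simp add: sum_Pinfty)
  ultimately show ?thesis
    unfolding exp_score_def using sum.remove[of "{..<n}" y ?f] \<open>y < n\<close>
    by (cases "sum ?f ({..<n} - {y})") auto
qed

lemma stoch_apply_rearrangement:
  fixes a :: "nat \<Rightarrow> 'a::order" and f :: "'a \<Rightarrow> real"
  assumes B: "doubly_stochastic n B" and lam: "lam \<in> simplex n" "sorted_desc n lam"
    and \<sigma>: "\<sigma> permutes {..<n}" and a_sorted: "sorted_desc n (\<lambda>i. a (\<sigma> i))"
    and f: "mono_on A f" and a: "\<forall>y<n. a y \<in> A"
  shows "(\<Sum>y<n. stoch_apply n B lam y * f (a y)) \<le> (\<Sum>k<n. lam k * f (a (\<sigma> k)))"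
proof -
  have "sorted_desc n (\<lambda>i. f (a (\<sigma> i)))"
    using a_sorted a permutes_in_image[OF \<sigma>] by (auto intro: mono_onD[OF f])
  from doubly_stochastic_rearrangement[OF B \<sigma> this lam(2)] lam(1)
  show ?thesis by (simp add: simplex_def stoch_apply_def)
qed

text \<open>Test the rearrangement inequality against the indicator of \<open>a > -\<infinity>\<close>.\<close>

lemma stoch_apply_MInf_weight_zero:
  fixes a :: "nat \<Rightarrow> ereal"
  assumes B: "doubly_stochastic n B" and lam: "lam \<in> simplex n" "sorted_desc n lam"
    and \<sigma>: "\<sigma> permutes {..<n}" and a_sorted: "sorted_desc n (\<lambda>i. a (\<sigma> i))"
    and w: "\<forall>y<n. a y = -\<infinity> \<longrightarrow> stoch_apply n B lam y = 0"
    and "k < n" "a (\<sigma> k) = -\<infinity>"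
  shows "lam k = 0"
proof -
  define ind where "ind x = (if x = -\<infinity> then 0 else 1 :: real)" for x :: ereal
  define d where "d k = lam k * (1 - ind (a (\<sigma> k)))" for k
  have "mono_on UNIV ind" unfolding ind_def by (rule mono_onI) auto
  then have "(\<Sum>y<n. stoch_apply n B lam y * ind (a y)) \<le> (\<Sum>k<n. lam k * ind (a (\<sigma> k)))"
    using stoch_apply_rearrangement[OF B lam \<sigma> a_sorted] by blast
  moreover have "(\<Sum>y<n. stoch_apply n B lam y * ind (a y)) = (\<Sum>y<n. stoch_apply n B lam y)"
    using w unfolding ind_def by (intro sum.cong) auto
  moreover have "(\<Sum>k<n. lam k * ind (a (\<sigma> k))) = (\<Sum>k<n. lam k) - (\<Sum>k<n. d k)"
    unfolding d_def right_diff_distrib sum_subtractf by simp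
  moreover have "(\<Sum>y<n. stoch_apply n B lam y) = 1" "(\<Sum>k<n. lam k) = 1"
    using stoch_apply_simplex[OF B lam(1)] lam(1) by (simp_all add: simplex_def)
  moreover have d_nonneg: "\<forall>k<n. 0 \<le> d k"
    using lam(1) by (simp add: simplex_def ind_def d_def)
  then have "0 \<le> (\<Sum>k<n. d k)" by (intro sum_nonneg) auto
  ultimately have "(\<Sum>k<n. d k) = 0" by linarith
  then have "d k = 0" using d_nonneg \<open>k < n\<close> by (subst (asm) sum_nonneg_eq_0_iff) auto
  then show ?thesis using \<open>a (\<sigma> k) = -\<infinity>\<close> by (simp add: d_def ind_def)
qed

lemma mono_on_real_of_ereal_max: "mono_on {x. x \<noteq> \<infinity>} (\<lambda>x. real_of_ereal (max x (ereal m)))"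
proof (rule mono_onI)
  fix x x' :: ereal assume "x \<in> {x. x \<noteq> \<infinity>}" "x' \<in> {x. x \<noteq> \<infinity>}" "x \<le> x'"
  then show "real_of_ereal (max x (ereal m)) \<le> real_of_ereal (max x' (ereal m))"
    by (cases x; cases x') (auto simp flip: ereal_max)
qed

text \<open>The rearrangement inequality for \<open>s q\<close>, truncated below by a constant under all of its
  finite values; outcomes scored \<open>-\<infinity>\<close> carry no weight on either side unless the left side
  is \<open>-\<infinity>\<close>.\<close>

lemma exp_score_stoch_apply_le:
  assumes B: "doubly_stochastic n B" and lam: "lam \<in> simplex n" "sorted_desc n lam"
    and \<sigma>: "\<sigma> permutes {..<n}" and a_sorted: "sorted_desc n (\<lambda>i. s q (\<sigma> i))"
    and a_fin: "\<forall>y<n. s q y \<noteq> \<infinity>"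
  shows "exp_score n s q (stoch_apply n B lam) \<le> exp_score n s q (lam \<circ> inv_into UNIV \<sigma>)"
proof -
  define w where "w = stoch_apply n B lam"
  have w: "w \<in> simplex n" unfolding w_def by (rule stoch_apply_simplex[OF B lam(1)])
  show ?thesis
  proof (cases "\<exists>y<n. w y \<noteq> 0 \<and> s q y = -\<infinity>")
    case True
    then have "exp_score n s q w = -\<infinity>"
      using w a_fin by (auto simp: simplex_def intro: exp_score_MInf)
    then show ?thesis by (simp add: w_def)
  next
    case False
    have lam_fin: "lam k = 0" if "k < n" "s q (\<sigma> k) = -\<infinity>" for k
      using stoch_apply_MInf_weight_zero[OF B lam \<sigma> a_sorted _ that] False unfolding w_def by blast
    define r where "r y = real_of_ereal (s q y)" for y
    define m where "m = - (\<Sum>y<n. \<bar>r y\<bar>)"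
    have m: "m \<le> r y" if "y < n" for y
      using member_le_sum[of y "{..<n}" "\<lambda>y. \<bar>r y\<bar>"] that unfolding m_def by auto
    define c where "c x = real_of_ereal (max x (ereal m))" for x
    have c: "c (s q y) = r y" if "y < n" "s q y \<noteq> -\<infinity>" for y
      using that a_fin m[OF that(1)] unfolding c_def r_def by (cases "s q y") auto
    have "(\<Sum>y<n. w y * c (s q y)) \<le> (\<Sum>k<n. lam k * c (s q (\<sigma> k)))"
      unfolding w_def c_def using a_fin
      by (intro stoch_apply_rearrangement[OF B lam \<sigma> a_sorted mono_on_real_of_ereal_max]) auto
    moreover have "(\<Sum>y<n. w y * c (s q y)) = (\<Sum>y<n. w y * r y)"
      using False c by (intro sum.cong) auto
    moreover have "(\<Sum>k<n. lam k * c (s q (\<sigma> k))) = (\<Sum>k<n. lam k * r (\<sigma> k))"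
      using lam_fin c permutes_in_image[OF \<sigma>] by (intro sum.cong) auto
    moreover have "\<dots> = (\<Sum>y<n. lam (inv_into UNIV \<sigma> y) * r y)"
      using sum.permute[OF permutes_inv[OF \<sigma>], of "\<lambda>k. lam k * r (\<sigma> k)"]
      by (simp add: comp_def permutes_inverses(1)[OF \<sigma>])
    moreover have "exp_score n s q w = ereal (\<Sum>y<n. w y * r y)"
      using False a_fin unfolding r_def by (intro exp_score_real) auto
    moreover have "s q y \<noteq> -\<infinity>" if "y < n" "lam (inv_into UNIV \<sigma> y) \<noteq> 0" for y
      using lam_fin[of "inv_into UNIV \<sigma> y"] that permutes_in_image[OF permutes_inv[OF \<sigma>]]
      by (auto simp: permutes_inverses(1)[OF \<sigma>])
    then have "exp_score n s q (lam \<circ> inv_into UNIV \<sigma>) = ereal (\<Sum>y<n. lam (inv_into UNIV \<sigma> y) * r y)"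
      using a_fin exp_score_real[of n "lam \<circ> inv_into UNIV \<sigma>" s q] unfolding r_def by auto
    ultimately show ?thesis by (simp add: w_def)
  qed
qed

section \<open>Spectral matrices\<close>

definition cinner :: "nat \<Rightarrow> complex vec \<Rightarrow> complex vec \<Rightarrow> complex" where
  "cinner n u v = (\<Sum>i<n. u $ i * cnj (v $ i))"

definition orthonormal_basis :: "nat \<Rightarrow> (nat \<Rightarrow> complex vec) \<Rightarrow> bool" where
  "orthonormal_basis n x \<longleftrightarrow> (\<forall>y<n. x y \<in> carrier_vec n) \<and>
     (\<forall>y<n. \<forall>z<n. cinner n (x y) (x z) = (if y = z then 1 else 0))"

definition spectral_mat :: "nat \<Rightarrow> (nat \<Rightarrow> complex vec) \<Rightarrow> (nat \<Rightarrow> real) \<Rightarrow> complex mat" where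
  "spectral_mat n x l = mat n n (\<lambda>(i, j). \<Sum>y<n. complex_of_real (l y) * (x y $ i * cnj (x y $ j)))"

definition qform :: "nat \<Rightarrow> complex vec \<Rightarrow> complex mat \<Rightarrow> complex" where
  "qform n v A = (\<Sum>i<n. \<Sum>j<n. cnj (v $ i) * A $$ (i, j) * v $ j)"

lemma cscalar_prod_eq_cinner:
  "u \<in> carrier_vec n \<Longrightarrow> v \<in> carrier_vec n \<Longrightarrow> u \<bullet>c v = cinner n u v"
  unfolding cinner_def scalar_prod_def by (auto simp: atLeast0LessThan intro!: sum.cong)

lemma cinner_commute: "cinner n u v = cnj (cinner n v u)"
  unfolding cinner_def by (simp add: cnj_sum mult.commute)

lemma orthonormal_basis_carrier: "orthonormal_basis n x \<Longrightarrow> y < n \<Longrightarrow> x y \<in> carrier_vec n"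
  unfolding orthonormal_basis_def by simp

lemma ordered_eigenbasis_orthonormal:
  assumes "ordered_eigenbasis n \<rho> x"
  shows "orthonormal_basis n x"
proof -
  have x: "\<forall>y<n. x y \<in> carrier_vec n" using assms by (simp add: ordered_eigenbasis_def)
  then have "cinner n (x y) (x z) = x y \<bullet>c x z" if "y < n" "z < n" for y z
    using that x by (simp add: cscalar_prod_eq_cinner[of _ n])
  then show ?thesis using assms x by (simp add: ordered_eigenbasis_def orthonormal_basis_def)
qed

lemma orthonormal_basis_unit_vec: "orthonormal_basis n (unit_vec n)"
proof -
  have "cinner n (unit_vec n y) (unit_vec n z) = (\<Sum>i<n. if i = y then (if y = z then 1 else 0) else 0)"
    if "y < n" "z < n" for y z
    unfolding cinner_def by (intro sum.cong) (auto simp: unit_vec_def)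
  then show ?thesis unfolding orthonormal_basis_def by auto
qed

lemma index_mult_mat_sum:
  "A \<in> carrier_mat m k \<Longrightarrow> B \<in> carrier_mat k l \<Longrightarrow> i < m \<Longrightarrow> j < l \<Longrightarrow>
   (A * B) $$ (i, j) = (\<Sum>t<k. A $$ (i, t) * B $$ (t, j))"
  by (auto simp: scalar_prod_def atLeast0LessThan intro!: sum.cong)

text \<open>The matrix with columns \<open>x\<^sub>y\<close> is unitary, so its rows are orthonormal as well.\<close>

lemma orthonormal_basis_complete:
  assumes x: "orthonormal_basis n x" and "i < n" "j < n"
  shows "(\<Sum>y<n. x y $ i * cnj (x y $ j)) = (if i = j then 1 else 0)"
proof -
  define U where "U = mat n n (\<lambda>(i, y). x y $ i)"
  define A where "A = mat n n (\<lambda>(y, i). cnj (x y $ i))"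
  have U: "U \<in> carrier_mat n n" and A: "A \<in> carrier_mat n n" unfolding U_def A_def by auto
  have "A * U = 1\<^sub>m n"
  proof (rule eq_matI)
    fix y z assume "y < dim_row (1\<^sub>m n)" "z < dim_col (1\<^sub>m n)"
    then have yz: "y < n" "z < n" by auto
    have "(A * U) $$ (y, z) = cinner n (x z) (x y)"
      using index_mult_mat_sum[OF A U yz] yz unfolding A_def U_def cinner_def
      by (auto simp: mult.commute intro!: sum.cong)
    then show "(A * U) $$ (y, z) = 1\<^sub>m n $$ (y, z)" using x yz by (auto simp: orthonormal_basis_def)
  qed (use A U in auto)
  then have "U * A = 1\<^sub>m n" by (rule mat_mult_left_right_inverse[OF A U])
  then show ?thesis
    using index_mult_mat_sum[OF U A \<open>i < n\<close> \<open>j < n\<close>] \<open>i < n\<close> \<open>j < n\<close>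
    unfolding A_def U_def by auto
qed

lemma parseval:
  assumes x: "orthonormal_basis n x"
  shows "complex_of_real (\<Sum>y<n. (cmod (cinner n v (x y)))\<^sup>2) = cinner n v v"
proof -
  define F where "F y i j = v $ j * (cnj (v $ i) * (x y $ i * cnj (x y $ j)))" for y i j
  have "complex_of_real (\<Sum>y<n. (cmod (cinner n v (x y)))\<^sup>2) = (\<Sum>y<n. \<Sum>i<n. \<Sum>j<n. F y i j)"
    unfolding of_real_sum complex_norm_square cinner_def F_def
    by (simp add: cnj_sum sum_distrib_left sum_distrib_right mult_ac)
  also have "\<dots> = (\<Sum>i<n. \<Sum>y<n. \<Sum>j<n. F y i j)" by (rule sum.swap)
  also have "\<dots> = (\<Sum>i<n. \<Sum>j<n. \<Sum>y<n. F y i j)" by (rule sum.cong[OF refl], rule sum.swap)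
  also have "\<dots> = (\<Sum>i<n. \<Sum>j<n. v $ j * cnj (v $ i) * (\<Sum>y<n. x y $ i * cnj (x y $ j)))"
    unfolding F_def by (simp add: sum_distrib_left mult_ac)
  also have "\<dots> = (\<Sum>i<n. \<Sum>j<n. if i = j then v $ i * cnj (v $ j) else 0)"
    using orthonormal_basis_complete[OF x] by (intro sum.cong refl) (auto simp: mult.commute)
  also have "\<dots> = cinner n v v" unfolding cinner_def by simp
  finally show ?thesis .
qed

lemma orthonormal_basis_expansion:
  assumes x: "orthonormal_basis n x" and "i < n"
  shows "(\<Sum>y<n. cinner n v (x y) * x y $ i) = v $ i"
proof -
  have "(\<Sum>y<n. cinner n v (x y) * x y $ i) = (\<Sum>j<n. v $ j * (\<Sum>y<n. x y $ i * cnj (x y $ j)))"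
    unfolding cinner_def sum_distrib_right sum_distrib_left
    by (subst sum.swap) (simp add: mult_ac)
  also have "\<dots> = (\<Sum>j<n. if i = j then v $ j else 0)"
    using orthonormal_basis_complete[OF x \<open>i < n\<close>] by (intro sum.cong) auto
  also have "\<dots> = v $ i" using \<open>i < n\<close> by simp
  finally show ?thesis .
qed

lemma spectral_mat_carrier [simp]: "spectral_mat n x l \<in> carrier_mat n n"
  and spectral_mat_dim [simp]: "dim_row (spectral_mat n x l) = n" "dim_col (spectral_mat n x l) = n"
  unfolding spectral_mat_def by auto

lemma index_spectral_mat:
  "i < n \<Longrightarrow> j < n \<Longrightarrow>
   spectral_mat n x l $$ (i, j) = (\<Sum>y<n. complex_of_real (l y) * (x y $ i * cnj (x y $ j)))"
  unfolding spectral_mat_def by auto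

lemma ordered_eigenbasis_spectral_mat:
  assumes "ordered_eigenbasis n \<rho> x" "\<rho> \<in> carrier_mat n n"
  shows "\<rho> = spectral_mat n x (eigvals n \<rho>)"
proof (rule eq_matI)
  fix i j assume "i < dim_row (spectral_mat n x (eigvals n \<rho>))" "j < dim_col (spectral_mat n x (eigvals n \<rho>))"
  then have ij: "i < n" "j < n" by auto
  have "outer (x y) $$ (i, j) = x y $ i * cnj (x y $ j)" if "y < n" for y
    using assms(1) ij that unfolding ordered_eigenbasis_def outer_def by auto
  then show "\<rho> $$ (i, j) = spectral_mat n x (eigvals n \<rho>) $$ (i, j)"
    using assms(1) ij unfolding ordered_eigenbasis_def index_spectral_mat[OF ij] by auto
qed (use assms(2) in auto)

lemma qform_spectral_mat:
  "qform n v (spectral_mat n x l) =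
   (\<Sum>y<n. complex_of_real (l y * (cmod (cinner n v (x y)))\<^sup>2))"
proof -
  define F where "F i j y = complex_of_real (l y) * (cnj (v $ i) * x y $ i) * (cnj (x y $ j) * v $ j)"
    for i j y
  have "qform n v (spectral_mat n x l) = (\<Sum>i<n. \<Sum>j<n. \<Sum>y<n. F i j y)"
    unfolding qform_def F_def
    by (auto intro!: sum.cong simp: index_spectral_mat sum_distrib_left sum_distrib_right mult_ac)
  also have "\<dots> = (\<Sum>i<n. \<Sum>y<n. \<Sum>j<n. F i j y)" by (rule sum.cong[OF refl], rule sum.swap)
  also have "\<dots> = (\<Sum>y<n. \<Sum>i<n. \<Sum>j<n. F i j y)" by (rule sum.swap)
  also have "\<dots> = (\<Sum>y<n. complex_of_real (l y) * (cinner n v (x y) * cnj (cinner n v (x y))))"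
    unfolding F_def cinner_def by (simp add: sum_distrib_left sum_distrib_right cnj_sum mult_ac)
  also have "\<dots> = (\<Sum>y<n. complex_of_real (l y * (cmod (cinner n v (x y)))\<^sup>2))"
    by (simp only: complex_norm_square of_real_mult)
  finally show ?thesis .
qed

lemma qform_spectral_mat_basis:
  assumes x: "orthonormal_basis n x" and "z < n"
  shows "qform n (x z) (spectral_mat n x l) = complex_of_real (l z)"
proof -
  have "qform n (x z) (spectral_mat n x l) = (\<Sum>y<n. if y = z then complex_of_real (l y) else 0)"
    unfolding qform_spectral_mat using x \<open>z < n\<close> by (intro sum.cong) (auto simp: orthonormal_basis_def)
  then show ?thesis using \<open>z < n\<close> by simp
qed

lemma spectral_mat_mult_vec:
  assumes "i < n"
  shows "(\<Sum>j<n. spectral_mat n x l $$ (i, j) * v $ j) =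
    (\<Sum>y<n. complex_of_real (l y) * x y $ i * cinner n v (x y))"
proof -
  have "(\<Sum>j<n. spectral_mat n x l $$ (i, j) * v $ j) =
      (\<Sum>j<n. \<Sum>y<n. complex_of_real (l y) * x y $ i * (v $ j * cnj (x y $ j)))"
    using assms
    by (auto simp: index_spectral_mat sum_distrib_left sum_distrib_right mult_ac intro!: sum.cong)
  also have "\<dots> = (\<Sum>y<n. complex_of_real (l y) * x y $ i * cinner n v (x y))"
    unfolding cinner_def by (subst sum.swap) (simp add: sum_distrib_left)
  finally show ?thesis .
qed

lemma spectral_mat_eqI:
  assumes x: "orthonormal_basis n x" and A: "A \<in> carrier_mat n n"
    and eigen: "\<forall>y<n. \<forall>i<n. (\<Sum>j<n. A $$ (i, j) * x y $ j) = complex_of_real (l y) * x y $ i"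
  shows "A = spectral_mat n x l"
proof (rule eq_matI)
  fix i j assume "i < dim_row (spectral_mat n x l)" "j < dim_col (spectral_mat n x l)"
  then have ij: "i < n" "j < n" by auto
  have "A $$ (i, j) = (\<Sum>k<n. if k = j then A $$ (i, k) else 0)" using ij by simp
  also have "\<dots> = (\<Sum>k<n. A $$ (i, k) * (\<Sum>y<n. x y $ k * cnj (x y $ j)))"
    using orthonormal_basis_complete[OF x _ ij(2)] by (intro sum.cong) auto
  also have "\<dots> = (\<Sum>k<n. \<Sum>y<n. A $$ (i, k) * x y $ k * cnj (x y $ j))"
    by (simp add: sum_distrib_left mult_ac)
  also have "\<dots> = (\<Sum>y<n. (\<Sum>k<n. A $$ (i, k) * x y $ k) * cnj (x y $ j))"
    by (subst sum.swap) (simp add: sum_distrib_right)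
  also have "\<dots> = spectral_mat n x l $$ (i, j)"
    using eigen ij by (simp add: index_spectral_mat mult_ac)
  finally show "A $$ (i, j) = spectral_mat n x l $$ (i, j)" .
qed (use A in auto)

lemma mtrace_spectral_mat:
  assumes x: "orthonormal_basis n x"
  shows "mtrace (spectral_mat n x l) = complex_of_real (\<Sum>y<n. l y)"
proof -
  have "mtrace (spectral_mat n x l) =
      (\<Sum>i<n. \<Sum>y<n. complex_of_real (l y) * (x y $ i * cnj (x y $ i)))"
    unfolding mtrace_def by (auto simp: index_spectral_mat intro!: sum.cong)
  also have "\<dots> = (\<Sum>y<n. complex_of_real (l y) * cinner n (x y) (x y))"
    unfolding cinner_def by (subst sum.swap) (simp add: sum_distrib_left)
  also have "\<dots> = complex_of_real (\<Sum>y<n. l y)"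
    using x by (simp add: orthonormal_basis_def)
  finally show ?thesis .
qed

lemma index_mat_adjoint:
  assumes "A \<in> carrier_mat m k"
  shows "mat_adjoint A \<in> carrier_mat k m"
    and "i < k \<Longrightarrow> j < m \<Longrightarrow> mat_adjoint A $$ (i, j) = cnj (A $$ (j, i))"
  using assms unfolding mat_adjoint_def mat_of_rows_def by auto

lemma mat_adjoint_spectral_mat: "mat_adjoint (spectral_mat n x l) = spectral_mat n x l"
  by (rule eq_matI)
    (auto simp: index_mat_adjoint[OF spectral_mat_carrier] index_spectral_mat cnj_sum mult_ac
      index_mat_adjoint(1)[OF spectral_mat_carrier, THEN carrier_matD(1)]
      index_mat_adjoint(1)[OF spectral_mat_carrier, THEN carrier_matD(2)])

lemma cscalar_prod_mult_mat_vec: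
  assumes v: "v \<in> carrier_vec n" and A: "A \<in> carrier_mat n n"
  shows "v \<bullet>c (A *\<^sub>v v) = cnj (qform n v A)"
proof -
  have "(A *\<^sub>v v) $ i = (\<Sum>j<n. A $$ (i, j) * v $ j)" if "i < n" for i
    using A v that by (auto simp: scalar_prod_def atLeast0LessThan intro!: sum.cong)
  then have "v \<bullet>c (A *\<^sub>v v) = (\<Sum>i<n. v $ i * cnj (\<Sum>j<n. A $$ (i, j) * v $ j))"
    using A v unfolding cscalar_prod_eq_cinner[OF v mult_mat_vec_carrier[OF A v]] cinner_def
    by (intro sum.cong) auto
  also have "\<dots> = cnj (qform n v A)"
    unfolding qform_def by (simp add: cnj_sum sum_distrib_left mult_ac)
  finally show ?thesis .
qed

lemma spectral_mat_Dens:
  assumes x: "orthonormal_basis n x" and l: "l \<in> simplex n"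
  shows "spectral_mat n x l \<in> Dens n"
proof -
  have "0 \<le> Re (v \<bullet>c (spectral_mat n x l *\<^sub>v v))" if v: "v \<in> carrier_vec n" for v
    unfolding cscalar_prod_mult_mat_vec[OF v spectral_mat_carrier] qform_spectral_mat
    using l by (auto simp: Re_sum simplex_def intro!: sum_nonneg)
  moreover have "mtrace (spectral_mat n x l) = 1"
    using l unfolding mtrace_spectral_mat[OF x] by (simp add: simplex_def)
  ultimately show ?thesis unfolding Dens_def using mat_adjoint_spectral_mat by auto
qed

lemma char_poly_spectral_mat:
  assumes x: "orthonormal_basis n x"
  shows "char_poly (spectral_mat n x l) = (\<Prod>i<n. [:- complex_of_real (l i), 1:])"
proof -
  define U where "U = mat n n (\<lambda>(i, y). x y $ i)"
  define A where "A = mat n n (\<lambda>(y, i). cnj (x y $ i))"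
  define D where "D = mat n n (\<lambda>(i, j). if i = j then complex_of_real (l i) else 0)"
  have U: "U \<in> carrier_mat n n" and A: "A \<in> carrier_mat n n" and D: "D \<in> carrier_mat n n"
    unfolding U_def A_def D_def by auto
  have UA: "U * A = 1\<^sub>m n"
  proof (rule eq_matI)
    fix i j assume "i < dim_row (1\<^sub>m n)" "j < dim_col (1\<^sub>m n)"
    then have ij: "i < n" "j < n" by auto
    have "(U * A) $$ (i, j) = (\<Sum>y<n. x y $ i * cnj (x y $ j))"
      using index_mult_mat_sum[OF U A ij] ij unfolding A_def U_def by (auto intro!: sum.cong)
    then show "(U * A) $$ (i, j) = 1\<^sub>m n $$ (i, j)" using orthonormal_basis_complete[OF x ij] ij by auto
  qed (use U A in auto)
  have AU: "A * U = 1\<^sub>m n" by (rule mat_mult_left_right_inverse[OF U A UA])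
  have eq: "spectral_mat n x l = U * D * A"
  proof (rule eq_matI)
    fix i j assume "i < dim_row (U * D * A)" "j < dim_col (U * D * A)"
    then have ij: "i < n" "j < n" using U A D by auto
    have UD: "(U * D) $$ (i, k) = x k $ i * complex_of_real (l k)" if "k < n" for k
    proof -
      have "(U * D) $$ (i, k) = (\<Sum>t<n. x t $ i * (if t = k then complex_of_real (l t) else 0))"
        using index_mult_mat_sum[OF U D ij(1) that] ij that unfolding U_def D_def
        by (auto intro!: sum.cong)
      also have "\<dots> = (\<Sum>t<n. if t = k then x t $ i * complex_of_real (l t) else 0)"
        by (intro sum.cong) auto
      finally show ?thesis using that by simp
    qed
    have "(U * D * A) $$ (i, j) = (\<Sum>k<n. x k $ i * complex_of_real (l k) * cnj (x k $ j))"
      using index_mult_mat_sum[OF mult_carrier_mat[OF U D] A ij] UD ij unfolding A_def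
      by (auto intro!: sum.cong)
    then show "spectral_mat n x l $$ (i, j) = (U * D * A) $$ (i, j)"
      using ij by (simp add: index_spectral_mat mult_ac)
  qed (use U A D in auto)
  have "similar_mat (spectral_mat n x l) D"
    by (rule similar_matI[OF _ UA AU eq]) (use U A D in auto)
  then have "char_poly (spectral_mat n x l) = char_poly D" by (rule char_poly_similar)
  also have "\<dots> = prod_list (map (\<lambda>a. [:- a, 1:]) (diag_mat D))"
    by (rule char_poly_upper_triangular[OF D]) (auto simp: upper_triangular_def D_def)
  also have "diag_mat D = map (\<lambda>i. complex_of_real (l i)) [0..<n]"
    unfolding diag_mat_def D_def by auto
  finally show ?thesis
    by (simp add: prod.distinct_set_conv_list[symmetric] atLeast0LessThan comp_def)
qed

text \<open>Peeling off the largest root: \<open>l\<^sub>1 0\<close> is a root of the right-hand side, hence equal to some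
  \<open>l\<^sub>2 i \<le> l\<^sub>2 0\<close>, and symmetrically.\<close>

lemma sorted_linear_factors_unique:
  fixes l1 l2 :: "nat \<Rightarrow> real"
  assumes "sorted_desc n l1" "sorted_desc n l2"
    and "(\<Prod>i<n. [:- complex_of_real (l1 i), 1:]) = (\<Prod>i<n. [:- complex_of_real (l2 i), 1:])"
  shows "\<forall>i<n. l1 i = l2 i"
  using assms
proof (induction n arbitrary: l1 l2)
  case 0 then show ?case by simp
next
  case (Suc n)
  have root_iff: "poly (\<Prod>i<m. [:- complex_of_real (f i), 1:]) (complex_of_real a) = 0 \<longleftrightarrow>
      (\<exists>i<m. a = f i)" for m and f :: "nat \<Rightarrow> real" and a
    by (auto simp: poly_prod)
  obtain i j where "i < Suc n" "l1 0 = l2 i" "j < Suc n" "l2 0 = l1 j"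
    using Suc.prems(3) root_iff[where m="Suc n" and f=l1 and a="l1 0"]
      root_iff[where m="Suc n" and f=l2 and a="l1 0"] root_iff[where m="Suc n" and f=l1 and a="l2 0"]
      root_iff[where m="Suc n" and f=l2 and a="l2 0"] by auto
  then have first: "l1 0 = l2 0" using Suc.prems(1,2) by (metis order_antisym zero_le)
  have "[:- complex_of_real (l1 0), 1:] * (\<Prod>i<n. [:- complex_of_real (l1 (Suc i)), 1:]) =
        [:- complex_of_real (l1 0), 1:] * (\<Prod>i<n. [:- complex_of_real (l2 (Suc i)), 1:])"
    using Suc.prems(3) unfolding prod.lessThan_Suc_shift first .
  moreover have "[:- complex_of_real (l1 0), 1:] \<noteq> 0" by simp
  ultimately have "(\<Prod>i<n. [:- complex_of_real (l1 (Suc i)), 1:]) =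
      (\<Prod>i<n. [:- complex_of_real (l2 (Suc i)), 1:])"
    using mult_left_cancel by blast
  then have "\<forall>i<n. l1 (Suc i) = l2 (Suc i)"
    using Suc.prems by (intro Suc.IH) auto
  then show ?case using first by (auto simp: less_Suc_eq_0_disj)
qed

lemma eigvals_eqI:
  assumes "\<forall>i\<ge>n. l i = 0" "sorted_desc n l"
    and "char_poly \<rho> = (\<Prod>i<n. [:- complex_of_real (l i), 1:])"
  shows "eigvals n \<rho> = l"
  unfolding eigvals_def
proof (rule the_equality)
  fix l' assume l': "(\<forall>i\<ge>n. l' i = 0) \<and> sorted_desc n l' \<and>
    char_poly \<rho> = (\<Prod>i<n. [:- complex_of_real (l' i), 1:])"
  then have "\<forall>i<n. l' i = l i"
    using assms by (intro sorted_linear_factors_unique) auto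
  then show "l' = l" using l' assms(1) by (metis linorder_not_less ext)
qed (use assms in auto)

lemma eigvals_spectral_mat:
  assumes x: "orthonormal_basis n x" and \<pi>: "\<pi> permutes {..<n}"
    and sorted: "sorted_desc n (\<lambda>i. l (\<pi> i))"
  shows "eigvals n (spectral_mat n x l) = (\<lambda>i. if i < n then l (\<pi> i) else 0)"
proof (rule eigvals_eqI)
  have "(\<Prod>i<n. [:- complex_of_real (l i), 1:]) = (\<Prod>i<n. [:- complex_of_real (l (\<pi> i)), 1:])"
    using prod.permute[OF \<pi>, of "\<lambda>i. [:- complex_of_real (l i), 1:]"] by (simp add: comp_def)
  then show "char_poly (spectral_mat n x l) =
      (\<Prod>i<n. [:- complex_of_real (if i < n then l (\<pi> i) else 0), 1:])"
    unfolding char_poly_spectral_mat[OF x] by simp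
qed (use sorted in auto)

text \<open>\<open>eigvals\<close> is a definite description; its defining properties are recovered from
  \<open>\<rho> = spectral_mat n x (eigvals n \<rho>)\<close> by computing the spectrum of the right-hand side.\<close>

lemma Dens_spectral_decomposition:
  assumes \<mu>: "spectral_measurement n \<mu>" and \<rho>: "\<rho> \<in> Dens n"
  obtains x where "orthonormal_basis n x" "\<forall>y<n. \<mu> \<rho> y = outer (x y)"
    "\<rho> = spectral_mat n x (eigvals n \<rho>)" "eigvals n \<rho> \<in> simplex n" "sorted_desc n (eigvals n \<rho>)"
proof -
  obtain x where eig: "ordered_eigenbasis n \<rho> x" and \<mu>\<rho>: "\<forall>y<n. \<mu> \<rho> y = outer (x y)"
    using \<mu> \<rho> unfolding spectral_measurement_def by blast
  have x: "orthonormal_basis n x" by (rule ordered_eigenbasis_orthonormal[OF eig])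
  have \<rho>_carrier: "\<rho> \<in> carrier_mat n n" using \<rho> by (simp add: Dens_def)
  define l where "l = eigvals n \<rho>"
  have \<rho>_eq: "\<rho> = spectral_mat n x l"
    unfolding l_def by (rule ordered_eigenbasis_spectral_mat[OF eig \<rho>_carrier])
  obtain \<pi> where \<pi>: "\<pi> permutes {..<n}" and sorted: "sorted_desc n (\<lambda>i. l (\<pi> i))"
    using ex_sorting_permutation by blast
  have l_eq: "l = (\<lambda>i. if i < n then l (\<pi> i) else 0)"
    using eigvals_spectral_mat[OF x \<pi> sorted] \<rho>_eq unfolding l_def by simp
  have "0 \<le> l z" if "z < n" for z
  proof -
    have xz: "x z \<in> carrier_vec n" by (rule orthonormal_basis_carrier[OF x that])
    have "0 \<le> Re (x z \<bullet>c (\<rho> *\<^sub>v x z))" using \<rho> xz by (simp add: Dens_def)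
    also have "x z \<bullet>c (\<rho> *\<^sub>v x z) = cnj (qform n (x z) \<rho>)"
      by (rule cscalar_prod_mult_mat_vec[OF xz \<rho>_carrier])
    also have "qform n (x z) \<rho> = complex_of_real (l z)"
      unfolding \<rho>_eq by (rule qform_spectral_mat_basis[OF x that])
    finally show ?thesis by simp
  qed
  moreover have "\<forall>i\<ge>n. l i = 0" using l_eq by (metis leD)
  moreover have "(\<Sum>y<n. l y) = 1"
    using \<rho> mtrace_spectral_mat[OF x, of l] unfolding \<rho>_eq[symmetric]
    by (simp add: Dens_def flip: of_real_sum)
  moreover have "sorted_desc n l" using sorted l_eq by (metis (no_types, lifting) le_less_trans)
  ultimately show thesis using that[OF x \<mu>\<rho>] \<rho>_eq unfolding l_def simplex_def by blast
qed

lemma hs_inner_outer: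
  assumes v: "v \<in> carrier_vec n" and A: "A \<in> carrier_mat n n"
  shows "hs_inner (outer v) A = qform n v A"
proof -
  have O: "outer v \<in> carrier_mat n n" using v by (simp add: outer_def)
  have entry: "outer v $$ (i, j) = v $ i * cnj (v $ j)" if "i < n" "j < n" for i j
    using v that by (simp add: outer_def)
  have "mat_adjoint (outer v) = outer v"
    using O carrier_matD[OF index_mat_adjoint(1)[OF O]]
    by (intro eq_matI) (auto simp: index_mat_adjoint[OF O] entry)
  then have "hs_inner (outer v) A = (\<Sum>i<n. \<Sum>t<n. v $ i * cnj (v $ t) * A $$ (t, i))"
    unfolding hs_inner_def mtrace_def using O v index_mult_mat_sum[OF O A]
    by (auto simp: outer_def intro!: sum.cong)
  also have "\<dots> = qform n v A"
    unfolding qform_def by (subst sum.swap) (auto intro!: sum.cong simp: mult_ac)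
  finally show ?thesis .
qed

section \<open>Spectral scores\<close>

definition meas_dist :: "nat \<Rightarrow> (nat \<Rightarrow> complex vec) \<Rightarrow> complex mat \<Rightarrow> nat \<Rightarrow> real" where
  "meas_dist n x \<rho> y = (if y < n then Re (qform n (x y) \<rho>) else 0)"

lemma spec_exp_score_meas_dist:
  assumes \<mu>: "\<forall>y<n. \<mu> \<rho>' y = outer (x y)" and x: "orthonormal_basis n x"
    and \<rho>: "\<rho> \<in> carrier_mat n n"
  shows "spec_exp_score n s \<mu> \<rho>' \<rho> = exp_score n s (eigvals n \<rho>') (meas_dist n x \<rho>)"
proof -
  have "Re (hs_inner (\<mu> \<rho>' y) \<rho>) = meas_dist n x \<rho> y" if "y < n" for y
    using \<mu> hs_inner_outer[OF orthonormal_basis_carrier[OF x that] \<rho>] that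
    by (simp add: meas_dist_def)
  then show ?thesis
    unfolding spec_exp_score_def exp_score_def Let_def by (intro sum.cong) auto
qed

lemma meas_dist_spectral_mat_basis:
  assumes "orthonormal_basis n x" "l \<in> simplex n"
  shows "meas_dist n x (spectral_mat n x l) = l"
  using assms qform_spectral_mat_basis[OF assms(1)] by (auto simp: meas_dist_def simplex_def)

definition overlap :: "nat \<Rightarrow> (nat \<Rightarrow> complex vec) \<Rightarrow> (nat \<Rightarrow> complex vec) \<Rightarrow> nat \<Rightarrow> nat \<Rightarrow> real" where
  "overlap n x' x y z = (cmod (cinner n (x' y) (x z)))\<^sup>2"

lemma doubly_stochastic_overlap:
  assumes x': "orthonormal_basis n x'" and x: "orthonormal_basis n x"
  shows "doubly_stochastic n (overlap n x' x)"
proof -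
  have norm1: "(\<Sum>z<n. (cmod (cinner n (x' y) (x z)))\<^sup>2) = 1"
    if "orthonormal_basis n x" "orthonormal_basis n x'" "y < n" for x x' y
  proof -
    have "complex_of_real (\<Sum>z<n. (cmod (cinner n (x' y) (x z)))\<^sup>2) = cinner n (x' y) (x' y)"
      by (rule parseval[OF that(1)])
    also have "\<dots> = 1" using that(2,3) by (simp add: orthonormal_basis_def)
    finally show ?thesis by (simp only: of_real_eq_1_iff)
  qed
  show ?thesis
    unfolding doubly_stochastic_def overlap_def
    using norm1[OF x x'] norm1[OF x' x] by (simp add: cinner_commute[of n "x _"])
qed

lemma meas_dist_spectral_mat:
  "meas_dist n x' (spectral_mat n x l) = stoch_apply n (overlap n x' x) l"
  unfolding meas_dist_def stoch_apply_def overlap_def qform_spectral_mat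
  by (rule ext) (simp add: Re_sum mult.commute)

lemma eigvals_spectral_mat_simplex:
  assumes "orthonormal_basis n x" "\<pi> permutes {..<n}" "l \<in> simplex n" "sorted_desc n (\<lambda>i. l (\<pi> i))"
  shows "eigvals n (spectral_mat n x l) = l \<circ> \<pi>"
  using eigvals_spectral_mat[OF assms(1,2,4)] simplex_permute[OF assms(2,3)]
  by (auto simp: simplex_def)

lemma spectral_mat_eq_if_overlap:
  assumes x: "orthonormal_basis n x" and x': "orthonormal_basis n x'"
    and l: "\<forall>y<n. \<forall>z<n. overlap n x' x y z \<noteq> 0 \<longrightarrow> l z = l' y"
  shows "spectral_mat n x l = spectral_mat n x' l'"
proof (rule spectral_mat_eqI[OF x' spectral_mat_carrier], intro allI impI)
  fix y i assume "y < n" "i < n"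
  have "(\<Sum>j<n. spectral_mat n x l $$ (i, j) * x' y $ j) =
      (\<Sum>z<n. complex_of_real (l z) * x z $ i * cinner n (x' y) (x z))"
    by (rule spectral_mat_mult_vec[OF \<open>i < n\<close>])
  also have "\<dots> = complex_of_real (l' y) * (\<Sum>z<n. cinner n (x' y) (x z) * x z $ i)"
    unfolding sum_distrib_left using l \<open>y < n\<close> by (intro sum.cong) (auto simp: overlap_def)
  also have "\<dots> = complex_of_real (l' y) * x' y $ i"
    using orthonormal_basis_expansion[OF x \<open>i < n\<close>] by simp
  finally show "(\<Sum>j<n. spectral_mat n x l $$ (i, j) * x' y $ j) = complex_of_real (l' y) * x' y $ i" .
qed

lemma eigvals_Dens:
  assumes "spectral_measurement n \<mu>" "\<rho> \<in> Dens n"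
  shows "eigvals n \<rho> \<in> simplex n" "sorted_desc n (eigvals n \<rho>)"
  by (rule Dens_spectral_decomposition[OF assms]; assumption)+

lemma spec_exp_score_self:
  assumes "spectral_measurement n \<mu>" "\<rho> \<in> Dens n"
  shows "spec_exp_score n s \<mu> \<rho> \<rho> = exp_score n s (eigvals n \<rho>) (eigvals n \<rho>)"
proof -
  obtain x where x: "orthonormal_basis n x" and \<mu>\<rho>: "\<forall>y<n. \<mu> \<rho> y = outer (x y)"
    and \<rho>_eq: "\<rho> = spectral_mat n x (eigvals n \<rho>)" and eig: "eigvals n \<rho> \<in> simplex n"
    by (rule Dens_spectral_decomposition[OF assms])
  have "meas_dist n x \<rho> = eigvals n \<rho>"
    by (subst \<rho>_eq) (rule meas_dist_spectral_mat_basis[OF x eig])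
  then show ?thesis
    using spec_exp_score_meas_dist[of n \<mu> \<rho> x \<rho> s, OF \<mu>\<rho> x] assms(2) by (simp add: Dens_def)
qed

text \<open>\<open>B\<close> is the overlap matrix of the eigenbases of \<open>\<rho>'\<close> and \<open>\<rho>\<close>.\<close>

lemma spec_exp_score_overlap:
  assumes \<mu>: "spectral_measurement n \<mu>" and \<rho>: "\<rho> \<in> Dens n" and \<rho>': "\<rho>' \<in> Dens n"
  obtains B where "doubly_stochastic n B"
    "spec_exp_score n s \<mu> \<rho>' \<rho> = exp_score n s (eigvals n \<rho>') (stoch_apply n B (eigvals n \<rho>))"
    "\<lbrakk>stoch_apply n B (eigvals n \<rho>) = eigvals n \<rho>';
      (\<Sum>y<n. (eigvals n \<rho>' y)\<^sup>2) = (\<Sum>z<n. (eigvals n \<rho> z)\<^sup>2)\<rbrakk> \<Longrightarrow> \<rho>' = \<rho>"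
proof -
  obtain x where x: "orthonormal_basis n x" and \<rho>_eq: "\<rho> = spectral_mat n x (eigvals n \<rho>)"
    by (rule Dens_spectral_decomposition[OF \<mu> \<rho>])
  obtain x' where x': "orthonormal_basis n x'" and \<mu>\<rho>': "\<forall>y<n. \<mu> \<rho>' y = outer (x' y)"
    and \<rho>'_eq: "\<rho>' = spectral_mat n x' (eigvals n \<rho>')"
    by (rule Dens_spectral_decomposition[OF \<mu> \<rho>'])
  define B where "B = overlap n x' x"
  have B: "doubly_stochastic n B" unfolding B_def by (rule doubly_stochastic_overlap[OF x' x])
  have "spec_exp_score n s \<mu> \<rho>' \<rho> = exp_score n s (eigvals n \<rho>') (stoch_apply n B (eigvals n \<rho>))"
    using spec_exp_score_meas_dist[of n \<mu> \<rho>' x' \<rho> s, OF \<mu>\<rho>' x'] \<rho>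
    unfolding B_def meas_dist_spectral_mat[symmetric] \<rho>_eq[symmetric] by (simp add: Dens_def)
  moreover have "\<rho>' = \<rho>"
    if w: "stoch_apply n B (eigvals n \<rho>) = eigvals n \<rho>'"
      and squares: "(\<Sum>y<n. (eigvals n \<rho>' y)\<^sup>2) = (\<Sum>z<n. (eigvals n \<rho> z)\<^sup>2)"
  proof -
    have "eigvals n \<rho> z = eigvals n \<rho>' y" if "y < n" "z < n" "B y z \<noteq> 0" for y z
      using doubly_stochastic_equal_sum_squares[OF B _ that] squares w[symmetric] that(1)
      by (simp add: stoch_apply_def)
    then have "spectral_mat n x (eigvals n \<rho>) = spectral_mat n x' (eigvals n \<rho>')"
      unfolding B_def by (intro spectral_mat_eq_if_overlap[OF x x']) auto
    then show ?thesis using \<rho>_eq \<rho>'_eq by argo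
  qed
  ultimately show thesis using that B by blast
qed

lemma exp_score_stoch_apply_le_rearranged:
  assumes "regular n s" "doubly_stochastic n B" "lam \<in> simplex n" "sorted_desc n lam" "q \<in> simplex n"
  obtains \<tau> where "\<tau> permutes {..<n}"
    "exp_score n s q (stoch_apply n B lam) \<le> exp_score n s q (lam \<circ> \<tau>)"
proof -
  obtain \<sigma> where \<sigma>: "\<sigma> permutes {..<n}" "sorted_desc n (\<lambda>i. s q (\<sigma> i))"
    using ex_sorting_permutation by blast
  show thesis
    using that[OF permutes_inv[OF \<sigma>(1)]] exp_score_stoch_apply_le[where s = s and q = q, OF assms(2-4) \<sigma>]
      regular_score_not_PInf[OF assms(1,5)] by blast
qed

lemma proper_exp_score_stoch_apply_le:
  assumes s: "perm_invariant n s" "regular n s" "proper n s"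
    and B: "doubly_stochastic n B" and lam: "lam \<in> simplex n" "sorted_desc n lam" and q: "q \<in> simplex n"
  shows "exp_score n s q (stoch_apply n B lam) \<le> exp_score n s lam lam"
proof -
  obtain \<tau> where \<tau>: "\<tau> permutes {..<n}"
    and le: "exp_score n s q (stoch_apply n B lam) \<le> exp_score n s q (lam \<circ> \<tau>)"
    by (rule exp_score_stoch_apply_le_rearranged[OF s(2) B lam q])
  note le
  also have "\<dots> \<le> exp_score n s (lam \<circ> \<tau>) (lam \<circ> \<tau>)"
    using s(3) simplex_permute[OF \<tau> lam(1)] q unfolding proper_def by blast
  also have "\<dots> = exp_score n s lam lam" by (rule exp_score_permute[OF s(1) \<tau> lam(1)])
  finally show ?thesis .
qed

lemma proper_imp_truthful:
  assumes s: "perm_invariant n s" "regular n s" "proper n s" and \<mu>: "spectral_measurement n \<mu>"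
  shows "truthful n s \<mu>"
  unfolding truthful_def
proof (intro ballI)
  fix \<rho> \<rho>' assume \<rho>: "\<rho> \<in> Dens n" and \<rho>': "\<rho>' \<in> Dens n"
  obtain B where "doubly_stochastic n B"
    and "spec_exp_score n s \<mu> \<rho>' \<rho> = exp_score n s (eigvals n \<rho>') (stoch_apply n B (eigvals n \<rho>))"
    using spec_exp_score_overlap[OF \<mu> \<rho> \<rho>', where s = s] by blast
  then show "spec_exp_score n s \<mu> \<rho>' \<rho> \<le> spec_exp_score n s \<mu> \<rho> \<rho>"
    using proper_exp_score_stoch_apply_le[OF s] eigvals_Dens[OF \<mu>] \<rho> \<rho>'
      spec_exp_score_self[OF \<mu> \<rho>] by simp
qed

text \<open>With \<open>\<lambda> = \<lambda>(\<rho>)\<close>, \<open>\<lambda>' = \<lambda>(\<rho>')\<close> and \<open>w = B \<lambda>\<close>, the chain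
  \<open>S(\<rho>';\<rho>) = E(\<lambda>';w) \<le> E(w;w) \<le> E(w;\<lambda>\<circ>\<tau>) \<le> E(\<lambda>\<circ>\<tau>;\<lambda>\<circ>\<tau>) = S(\<rho>;\<rho>)\<close> has a strict step
  unless \<open>\<lambda>' = w = \<lambda>\<circ>\<tau>\<close>, and then \<open>\<rho>' = \<rho>\<close>.\<close>

lemma strictly_proper_imp_strictly_truthful:
  assumes s: "perm_invariant n s" "regular n s" "strictly_proper n s"
    and \<mu>: "spectral_measurement n \<mu>"
  shows "strictly_truthful n s \<mu>"
  unfolding strictly_truthful_def
proof (intro ballI impI)
  fix \<rho> \<rho>' assume \<rho>: "\<rho> \<in> Dens n" and \<rho>': "\<rho>' \<in> Dens n" and "\<rho>' \<noteq> \<rho>"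
  have proper: "proper n s" by (rule strictly_proper_imp_proper[OF s(3)])
  define lam lam' where "lam = eigvals n \<rho>" and "lam' = eigvals n \<rho>'"
  have lam: "lam \<in> simplex n" "sorted_desc n lam" and lam': "lam' \<in> simplex n"
    unfolding lam_def lam'_def using eigvals_Dens[OF \<mu>] \<rho> \<rho>' by auto
  obtain B where B: "doubly_stochastic n B"
    and score: "spec_exp_score n s \<mu> \<rho>' \<rho> = exp_score n s lam' (stoch_apply n B lam)"
    and recover: "\<lbrakk>stoch_apply n B lam = lam'; (\<Sum>y<n. (lam' y)\<^sup>2) = (\<Sum>z<n. (lam z)\<^sup>2)\<rbrakk> \<Longrightarrow> \<rho>' = \<rho>"
    using spec_exp_score_overlap[OF \<mu> \<rho> \<rho>', where s = s] unfolding lam_def lam'_def by blast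
  define w where "w = stoch_apply n B lam"
  have w: "w \<in> simplex n" unfolding w_def by (rule stoch_apply_simplex[OF B lam(1)])
  have "exp_score n s lam' w < exp_score n s lam lam"
  proof (cases "lam' = w")
    case False
    then have "exp_score n s lam' w < exp_score n s w w"
      using s(3) w lam' unfolding strictly_proper_def by blast
    also have "\<dots> \<le> exp_score n s lam lam"
      unfolding w_def using proper_exp_score_stoch_apply_le[OF s(1,2) proper B lam] w w_def by simp
    finally show ?thesis .
  next
    case True
    obtain \<tau> where \<tau>: "\<tau> permutes {..<n}" and le: "exp_score n s w w \<le> exp_score n s w (lam \<circ> \<tau>)"
      using exp_score_stoch_apply_le_rearranged[OF s(2) B lam w] unfolding w_def by blast
    have "w \<noteq> lam \<circ> \<tau>"
    proof
      assume "w = lam \<circ> \<tau>"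
      then have "(\<Sum>y<n. (lam' y)\<^sup>2) = (\<Sum>z<n. (lam z)\<^sup>2)"
        using True sum.permute[OF \<tau>, of "\<lambda>z. (lam z)\<^sup>2"] by (simp add: comp_def)
      then show False using recover True \<open>\<rho>' \<noteq> \<rho>\<close> unfolding w_def by blast
    qed
    then have "exp_score n s w (lam \<circ> \<tau>) < exp_score n s (lam \<circ> \<tau>) (lam \<circ> \<tau>)"
      using s(3) w simplex_permute[OF \<tau> lam(1)] unfolding strictly_proper_def by blast
    also have "\<dots> = exp_score n s lam lam" by (rule exp_score_permute[OF s(1) \<tau> lam(1)])
    finally show ?thesis using le True by simp
  qed
  then show "spec_exp_score n s \<mu> \<rho>' \<rho> < spec_exp_score n s \<mu> \<rho> \<rho>"
    using score spec_exp_score_self[OF \<mu> \<rho>] unfolding w_def lam_def by simp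
qed

text \<open>Conversely, every classical pair \<open>(q, p)\<close> is realised by commuting states: \<open>\<rho>'\<close> with spectrum
  \<open>q\<close> and \<open>\<rho>\<close> with spectrum \<open>p\<close>, written in the eigenbasis that \<open>\<mu>\<close> assigns to \<open>\<rho>'\<close>.\<close>

lemma spec_exp_score_embeds_exp_score:
  assumes s: "perm_invariant n s" and \<mu>: "spectral_measurement n \<mu>"
    and p: "p \<in> simplex n" and q: "q \<in> simplex n"
  obtains \<rho> \<rho>' where "\<rho> \<in> Dens n" "\<rho>' \<in> Dens n"
    "spec_exp_score n s \<mu> \<rho>' \<rho> = exp_score n s q p" "spec_exp_score n s \<mu> \<rho> \<rho> = exp_score n s p p"
    "q \<noteq> p \<longrightarrow> \<rho>' \<noteq> \<rho>"
proof -
  obtain \<sigma> where \<sigma>: "\<sigma> permutes {..<n}" "sorted_desc n (\<lambda>i. q (\<sigma> i))"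
    using ex_sorting_permutation by blast
  define \<rho>' where "\<rho>' = spectral_mat n (unit_vec n) q"
  have \<rho>': "\<rho>' \<in> Dens n"
    unfolding \<rho>'_def by (rule spectral_mat_Dens[OF orthonormal_basis_unit_vec q])
  have eig\<rho>': "eigvals n \<rho>' = q \<circ> \<sigma>"
    unfolding \<rho>'_def by (rule eigvals_spectral_mat_simplex[OF orthonormal_basis_unit_vec \<sigma>(1) q \<sigma>(2)])
  obtain x' where x': "orthonormal_basis n x'" and \<mu>\<rho>': "\<forall>y<n. \<mu> \<rho>' y = outer (x' y)"
    and \<rho>'_eig: "\<rho>' = spectral_mat n x' (eigvals n \<rho>')"
    by (rule Dens_spectral_decomposition[OF \<mu> \<rho>'])
  have \<rho>'_eq: "\<rho>' = spectral_mat n x' (q \<circ> \<sigma>)" using \<rho>'_eig unfolding eig\<rho>' .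
  define \<rho> where "\<rho> = spectral_mat n x' (p \<circ> \<sigma>)"
  have p\<sigma>: "p \<circ> \<sigma> \<in> simplex n" by (rule simplex_permute[OF \<sigma>(1) p])
  have \<rho>: "\<rho> \<in> Dens n" unfolding \<rho>_def by (rule spectral_mat_Dens[OF x' p\<sigma>])
  have "spec_exp_score n s \<mu> \<rho>' \<rho> = exp_score n s (q \<circ> \<sigma>) (p \<circ> \<sigma>)"
    using spec_exp_score_meas_dist[of n \<mu> \<rho>' x' \<rho> s, OF \<mu>\<rho>' x']
      meas_dist_spectral_mat_basis[OF x' p\<sigma>]
    unfolding eig\<rho>' \<rho>_def by simp
  also have "\<dots> = exp_score n s q p" by (rule exp_score_permute[OF s \<sigma>(1) q])
  finally have cross: "spec_exp_score n s \<mu> \<rho>' \<rho> = exp_score n s q p" .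
  obtain \<pi> where \<pi>: "\<pi> permutes {..<n}" "sorted_desc n (\<lambda>i. (p \<circ> \<sigma>) (\<pi> i))"
    using ex_sorting_permutation by blast
  have "eigvals n \<rho> = p \<circ> (\<sigma> \<circ> \<pi>)"
    unfolding \<rho>_def comp_assoc[symmetric] by (rule eigvals_spectral_mat_simplex[OF x' \<pi>(1) p\<sigma> \<pi>(2)])
  then have self: "spec_exp_score n s \<mu> \<rho> \<rho> = exp_score n s p p"
    using spec_exp_score_self[OF \<mu> \<rho>] exp_score_permute[OF s permutes_compose[OF \<pi>(1) \<sigma>(1)] p] by simp
  have "q \<noteq> p \<longrightarrow> \<rho>' \<noteq> \<rho>"
  proof (intro impI notI)
    assume "q \<noteq> p" "\<rho>' = \<rho>"
    have "q \<circ> \<sigma> = meas_dist n x' \<rho>'"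
      unfolding \<rho>'_eq by (rule meas_dist_spectral_mat_basis[OF x' simplex_permute[OF \<sigma>(1) q], symmetric])
    also have "\<dots> = p \<circ> \<sigma>"
      unfolding \<open>\<rho>' = \<rho>\<close> \<rho>_def by (rule meas_dist_spectral_mat_basis[OF x' p\<sigma>])
    finally have "q \<circ> \<sigma> = p \<circ> \<sigma>" .
    then have "q (\<sigma> (inv_into UNIV \<sigma> y)) = p (\<sigma> (inv_into UNIV \<sigma> y))" for y
      by (simp add: fun_eq_iff)
    then show False
      using \<open>q \<noteq> p\<close> by (simp add: permutes_inverses(1)[OF \<sigma>(1)] fun_eq_iff)
  qed
  with that \<rho> \<rho>' cross self show thesis .
qed

lemma truthful_imp_proper:
  assumes "perm_invariant n s" "spectral_measurement n \<mu>" "truthful n s \<mu>"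
  shows "proper n s"
  unfolding proper_def
proof (intro ballI)
  fix p q assume "p \<in> simplex n" "q \<in> simplex n"
  then obtain \<rho> \<rho>' where "\<rho> \<in> Dens n" "\<rho>' \<in> Dens n"
    and cross: "spec_exp_score n s \<mu> \<rho>' \<rho> = exp_score n s q p"
    and self: "spec_exp_score n s \<mu> \<rho> \<rho> = exp_score n s p p"
    and "q \<noteq> p \<longrightarrow> \<rho>' \<noteq> \<rho>"
    by (rule spec_exp_score_embeds_exp_score[OF assms(1,2)])
  then have "spec_exp_score n s \<mu> \<rho>' \<rho> \<le> spec_exp_score n s \<mu> \<rho> \<rho>"
    using assms(3) unfolding truthful_def by blast
  then show "exp_score n s q p \<le> exp_score n s p p" unfolding cross self .
qed

lemma strictly_truthful_imp_strictly_proper: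
  assumes "perm_invariant n s" "spectral_measurement n \<mu>" "strictly_truthful n s \<mu>"
  shows "strictly_proper n s"
  unfolding strictly_proper_def
proof (intro ballI impI)
  fix p q assume p: "p \<in> simplex n" and q: "q \<in> simplex n" and "q \<noteq> p"
  obtain \<rho> \<rho>' where "\<rho> \<in> Dens n" "\<rho>' \<in> Dens n"
    and cross: "spec_exp_score n s \<mu> \<rho>' \<rho> = exp_score n s q p"
    and self: "spec_exp_score n s \<mu> \<rho> \<rho> = exp_score n s p p"
    and "q \<noteq> p \<longrightarrow> \<rho>' \<noteq> \<rho>"
    by (rule spec_exp_score_embeds_exp_score[OF assms(1,2) p q])
  then have "spec_exp_score n s \<mu> \<rho>' \<rho> < spec_exp_score n s \<mu> \<rho> \<rho>"
    using assms(3) \<open>q \<noteq> p\<close> unfolding strictly_truthful_def by blast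
  then show "exp_score n s q p < exp_score n s p p" unfolding cross self .
qed

theorem theorem4p4:
  fixes n :: nat
    and s :: "(nat \<Rightarrow> real) \<Rightarrow> nat \<Rightarrow> ereal"
    and \<mu> :: "complex mat \<Rightarrow> nat \<Rightarrow> complex mat"
  assumes "perm_invariant n s"
    and "regular n s"
    and "spectral_measurement n \<mu>"
  shows "(truthful n s \<mu> \<longleftrightarrow> proper n s) \<and>
         (strictly_truthful n s \<mu> \<longleftrightarrow> strictly_proper n s)"
  using truthful_imp_proper[OF assms(1,3)] proper_imp_truthful[OF assms(1,2) _ assms(3)]
    strictly_truthful_imp_strictly_proper[OF assms(1,3)]
    strictly_proper_imp_strictly_truthful[OF assms(1,2) _ assms(3)]
  by blast

end
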